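(* Let $m$ be an odd integer with $m\geq 7$, and let $p'$ be the smallest odd prime not dividing $m$. Then $p' < 0.6\cdot m$. *)

theory Defs
  imports Complex_Main "HOL-Computational_Algebra.Primes"
begin

end

theory Submission
  imports Defs
begin

text \<open>
  If \<open>3\<close> does not divide \<open>m\<close>, then \<open>p' = 3\<close>. Otherwise \<open>m = 3k\<close> with \<open>k\<close> odd, and one of
  \<open>k - 2\<close>, \<open>k + 2\<close> is not divisible by \<open>3\<close>. That number is odd and coprime to \<open>k\<close>, so any
  prime factor of it is an odd prime not dividing \<open>m\<close>, and it is at most \<open>k + 2 < 0.6 \<cdot> 3k\<close>.
\<close>

text \<open>Integers have no well-order instance, so \<open>LEAST\<close> on them needs a lower bound.\<close>

lemma Least_le_int_nonneg:
  fixes P :: "int \<Rightarrow> bool"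
  assumes "P x" and nonneg: "\<And>p. P p \<Longrightarrow> p \<ge> 0"
  shows "(LEAST p. P p) \<le> x"
proof -
  define n where "n = (LEAST n::nat. P (int n))"
  have least: "int n \<le> y" if "P y" for y
  proof -
    have "P (int (nat y))" using that nonneg[OF that] by simp
    then have "n \<le> nat y" unfolding n_def by (rule Least_le)
    then show ?thesis using nonneg[OF that] by linarith
  qed
  have "P (int (nat x))" using assms by simp
  then have "P (int n)" unfolding n_def by (rule LeastI)
  then have "(LEAST p. P p) = int n"
    using least by (intro Least_equality) auto
  then show ?thesis using least[OF \<open>P x\<close>] by simp
qed

lemma coprime_odd_if_diff_dvd_2:
  fixes n k :: int
  assumes "odd k" and "(n - k) dvd 2"
  shows "coprime n k"
proof (rule coprime_imp_coprime[of 2 k])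
  show "coprime 2 k" using \<open>odd k\<close> by simp
  show "e dvd 2" if "e dvd n" and "e dvd k" for e
    using that assms(2) dvd_diff dvd_trans by blast
qed

lemma odd_prime_not_dvd_3_times_le:
  fixes k :: int
  assumes "odd k" and "k \<ge> 3"
  obtains r where "prime r" "odd r" "\<not> r dvd 3 * k" "r \<le> k + 2"
proof -
  obtain n where n: "n = k - 2 \<or> n = k + 2" "\<not> 3 dvd n" "n > 1"
  proof (cases "3 dvd k + 2")
    case True
    then have "\<not> 3 dvd k - 2" "k - 2 > 1" using assms by presburger+
    then show ?thesis using that[of "k - 2"] by simp
  next
    case False
    then show ?thesis using that[of "k + 2"] assms by simp
  qed
  have "odd n" using n(1) \<open>odd k\<close> by auto
  have "coprime n k" using n(1) \<open>odd k\<close> by (intro coprime_odd_if_diff_dvd_2) auto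
  obtain r where r: "prime r" "r dvd n"
    using prime_divisor_exists[of n] n(3) by auto
  have "coprime r k" using r(2) \<open>coprime n k\<close> by (rule coprime_divisors[OF _ dvd_refl])
  moreover have "\<not> 3 dvd r" using r(2) n(2) dvd_trans by blast
  then have "coprime r 3" using prime_imp_coprime[of 3 r] by (simp add: coprime_commute)
  ultimately have "coprime r (3 * k)" by simp
  then have "\<not> r dvd 3 * k" using r(1) coprime_absorb_left not_prime_unit by blast
  moreover have "odd r" using \<open>odd n\<close> r(2) dvd_trans by blast
  moreover have "r \<le> n" using r(2) n(3) by (simp add: zdvd_imp_le)
  ultimately show ?thesis using that r(1) n(1) by fastforce
qed

theorem mainTheorem3:
  fixes m :: int
  assumes "odd m" and "m \<ge> 7"
  shows "real_of_int (LEAST p::int. prime p \<and> odd p \<and> \<not> p dvd m) < 0.6 * real_of_int m"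
proof -
  let ?P = "\<lambda>p::int. prime p \<and> odd p \<and> \<not> p dvd m"
  have nonneg: "p \<ge> 0" if "?P p" for p using that by (simp add: prime_ge_0_int)
  show ?thesis
  proof (cases "3 dvd m")
    case False
    then have "(LEAST p. ?P p) \<le> 3" by (intro Least_le_int_nonneg nonneg) auto
    then show ?thesis using \<open>m \<ge> 7\<close> by linarith
  next
    case True
    then obtain k where m: "m = 3 * k" by blast
    with assms have "odd k" "k \<ge> 3" by auto
    then obtain r where "prime r" "odd r" "\<not> r dvd m" "r \<le> k + 2"
      unfolding m by (rule odd_prime_not_dvd_3_times_le)
    then have "(LEAST p. ?P p) \<le> r" by (intro Least_le_int_nonneg nonneg) auto
    then show ?thesis using m \<open>r \<le> k + 2\<close> \<open>k \<ge> 3\<close> by linarith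
  qed
qed

end
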